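(* Let $(X_1,\le_1)$, $(X_2,\le_2)$ be partially ordered sets with directed completions $(\overline X_1,\iota_1)$, $(\overline X_2,\iota_2)$. Then the directed completion of $X_1\times X_2$ with the product order is $\overline X_1\times\overline X_2$ with the product order, together with the map $(x_1,x_2)\mapsto(\iota_1(x_1),\iota_2(x_2))$.
   Context: The product order on $X_1\times X_2$: $(a_1,a_2)\le(b_1,b_2)$ iff $a_1\le_1b_1$ and $a_2\le_2b_2$. A subset $D$ of a partially ordered set is directed if every finite subset of $D$ (including the empty one) has an upper bound in $D$. A partially ordered set is a dcpo if every directed subset has a supremum. A map $T$ between partially ordered sets has the Monotone Convergence Property (Mcp) if for every directed $D$ having a supremum, $T(D)$ has a supremum and $T(\sup D)=\sup T(D)$. A directed completion of $(X,\le)$ is a dcpo $(\overline X,\bar\le)$ together with a map $\iota:X\to\overline X$ with the Mcp such that for every dcpo $Z$ and every map $T:X\to Z$ with the Mcp there is a unique map $\bar T:\overline X\to Z$ with the Mcp satisfying $\bar T\circ\iota=T$. *)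

theory Defs
  imports Main
begin

definition poset :: "'a set \<Rightarrow> ('a \<Rightarrow> 'a \<Rightarrow> bool) \<Rightarrow> bool" where
  "poset A le \<longleftrightarrow>
     (\<forall>x\<in>A. le x x) \<and>
     (\<forall>x\<in>A. \<forall>y\<in>A. le x y \<and> le y x \<longrightarrow> x = y) \<and>
     (\<forall>x\<in>A. \<forall>y\<in>A. \<forall>z\<in>A. le x y \<and> le y z \<longrightarrow> le x z)"

definition prod_le :: "('a \<Rightarrow> 'a \<Rightarrow> bool) \<Rightarrow> ('b \<Rightarrow> 'b \<Rightarrow> bool) \<Rightarrow> 'a \<times> 'b \<Rightarrow> 'a \<times> 'b \<Rightarrow> bool" where
  "prod_le le1 le2 p q \<longleftrightarrow> le1 (fst p) (fst q) \<and> le2 (snd p) (snd q)"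

definition is_sup :: "'a set \<Rightarrow> ('a \<Rightarrow> 'a \<Rightarrow> bool) \<Rightarrow> 'a set \<Rightarrow> 'a \<Rightarrow> bool" where
  "is_sup A le S s \<longleftrightarrow>
     s \<in> A \<and> (\<forall>x\<in>S. le x s) \<and> (\<forall>u\<in>A. (\<forall>x\<in>S. le x u) \<longrightarrow> le s u)"

definition has_sup :: "'a set \<Rightarrow> ('a \<Rightarrow> 'a \<Rightarrow> bool) \<Rightarrow> 'a set \<Rightarrow> bool" where
  "has_sup A le S \<longleftrightarrow> (\<exists>s. is_sup A le S s)"

text \<open>Directed subsets: every finite subset (including the empty one) has an upper bound in D.\<close>

definition directed :: "'a set \<Rightarrow> ('a \<Rightarrow> 'a \<Rightarrow> bool) \<Rightarrow> 'a set \<Rightarrow> bool" where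
  "directed A le D \<longleftrightarrow>
     D \<subseteq> A \<and> (\<forall>F. finite F \<and> F \<subseteq> D \<longrightarrow> (\<exists>u\<in>D. \<forall>x\<in>F. le x u))"

definition dcpo :: "'a set \<Rightarrow> ('a \<Rightarrow> 'a \<Rightarrow> bool) \<Rightarrow> bool" where
  "dcpo A le \<longleftrightarrow> poset A le \<and> (\<forall>D. directed A le D \<longrightarrow> has_sup A le D)"

definition mcp :: "'a set \<Rightarrow> ('a \<Rightarrow> 'a \<Rightarrow> bool) \<Rightarrow> 'b set \<Rightarrow> ('b \<Rightarrow> 'b \<Rightarrow> bool) \<Rightarrow> ('a \<Rightarrow> 'b) \<Rightarrow> bool" where
  "mcp A le B leB T \<longleftrightarrow>
     (\<forall>x\<in>A. T x \<in> B) \<and>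
     (\<forall>D s. directed A le D \<and> is_sup A le D s \<longrightarrow> is_sup B leB (T ` D) (T s))"

text \<open>Directed completion, with the universal property quantified over all dcpos Z
  whose elements live in the type 'z (given by the TYPE argument).  Maps are compared
  (for uniqueness) on the carrier only.\<close>

definition directed_completion ::
  "'z itself \<Rightarrow> 'a set \<Rightarrow> ('a \<Rightarrow> 'a \<Rightarrow> bool) \<Rightarrow> 'b set \<Rightarrow> ('b \<Rightarrow> 'b \<Rightarrow> bool) \<Rightarrow> ('a \<Rightarrow> 'b) \<Rightarrow> bool"
where
  "directed_completion _ X le Xb leb \<iota> \<longleftrightarrow>
     dcpo Xb leb \<and> mcp X le Xb leb \<iota> \<and>
     (\<forall>(Z :: 'z set) leZ T. dcpo Z leZ \<and> mcp X le Z leZ T \<longrightarrow>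
        (\<exists>Tb. mcp Xb leb Z leZ Tb \<and> (\<forall>x\<in>X. Tb (\<iota> x) = T x) \<and>
           (\<forall>U. mcp Xb leb Z leZ U \<and> (\<forall>x\<in>X. U (\<iota> x) = T x) \<longrightarrow> (\<forall>y\<in>Xb. U y = Tb y))))"

end

theory Submission
  imports Defs
begin

(* A map on X1 \<times> X2 has the Mcp exactly when it has it in each variable separately: directed
   suprema in a product are computed coordinatewise, and iterated directed suprema commute.
   So an Mcp map T on X1 \<times> X2 can be extended one variable at a time, first x1 along \<iota>1 for
   every fixed x2, then the result along \<iota>2 in x2.  That each partial extension is still Mcp in
   the other variable follows from an induction principle: a subset of a directed completion
   that contains the image of \<iota> and is closed under directed suprema is everything.  Uniqueness
   follows, again one variable at a time, from the uniqueness of extensions. *)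

lemma poset_refl: "poset A le \<Longrightarrow> x \<in> A \<Longrightarrow> le x x"
  unfolding poset_def by blast

lemma poset_antisym: "poset A le \<Longrightarrow> x \<in> A \<Longrightarrow> y \<in> A \<Longrightarrow> le x y \<Longrightarrow> le y x \<Longrightarrow> x = y"
  unfolding poset_def by blast

lemma poset_trans:
  "poset A le \<Longrightarrow> x \<in> A \<Longrightarrow> y \<in> A \<Longrightarrow> z \<in> A \<Longrightarrow> le x y \<Longrightarrow> le y z \<Longrightarrow> le x z"
  unfolding poset_def by blast

lemma is_sup_unique: "poset A le \<Longrightarrow> is_sup A le S s \<Longrightarrow> is_sup A le S t \<Longrightarrow> s = t"
  unfolding poset_def is_sup_def by blast

lemma poset_subset: "poset A le \<Longrightarrow> P \<subseteq> A \<Longrightarrow> poset P le"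
  unfolding poset_def by (simp add: subset_iff) meson

lemma is_sup_in_subset: "is_sup A le S s \<Longrightarrow> B \<subseteq> A \<Longrightarrow> s \<in> B \<Longrightarrow> is_sup B le S s"
  unfolding is_sup_def by blast

lemma directed_nonempty: "directed A le D \<Longrightarrow> D \<noteq> {}"
  unfolding directed_def by blast

lemma directed_upper_bound2:
  assumes "directed A le D" "x \<in> D" "y \<in> D"
  obtains u where "u \<in> D" "le x u" "le y u"
  using assms unfolding directed_def
  by (metis empty_subsetI finite.emptyI finite_insert insert_iff insert_subset)

lemma directed_image_mono:
  assumes D: "directed A le D" and into: "\<forall>x\<in>D. T x \<in> B"
    and mono: "\<forall>x\<in>D. \<forall>y\<in>D. le x y \<longrightarrow> leB (T x) (T y)"
  shows "directed B leB (T ` D)"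
  unfolding directed_def
proof (intro conjI allI impI)
  show "T ` D \<subseteq> B" using into by blast
  fix F assume "finite F \<and> F \<subseteq> T ` D"
  then obtain F' where F': "F' \<subseteq> D" "finite F'" "F = T ` F'"
    by (meson finite_subset_image)
  then obtain u where "u \<in> D" "\<forall>x\<in>F'. le x u"
    using D unfolding directed_def by blast
  then show "\<exists>u\<in>T ` D. \<forall>x\<in>F. leB x u"
    using F' mono by blast
qed

lemma is_sup_cofinal:
  assumes pZ: "poset Z leZ" and "S \<subseteq> S'" "S' \<subseteq> Z"
    and cof: "\<forall>y\<in>S'. \<exists>x\<in>S. leZ y x" and m: "is_sup Z leZ S' m"
  shows "is_sup Z leZ S m"
  unfolding is_sup_def
proof (intro conjI ballI impI)
  show "m \<in> Z" "\<And>x. x \<in> S \<Longrightarrow> leZ x m"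
    using assms(2) m unfolding is_sup_def by blast+
  fix u assume u: "u \<in> Z" "\<forall>x\<in>S. leZ x u"
  have "leZ y u" if "y \<in> S'" for y
  proof -
    obtain x where "x \<in> S" "leZ y x" using cof \<open>y \<in> S'\<close> by blast
    then show ?thesis
      using poset_trans[OF pZ, of y x u] u \<open>y \<in> S'\<close> assms(2,3) by blast
  qed
  then show "leZ m u" using m u(1) unfolding is_sup_def by blast
qed

lemma mcp_into: "mcp A le B leB T \<Longrightarrow> x \<in> A \<Longrightarrow> T x \<in> B"
  unfolding mcp_def by blast

lemma mcp_is_sup:
  "mcp A le B leB T \<Longrightarrow> directed A le D \<Longrightarrow> is_sup A le D s \<Longrightarrow> is_sup B leB (T ` D) (T s)"
  unfolding mcp_def by blast

lemma mcp_mono: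
  assumes "poset A le" "mcp A le B leB T" "x \<in> A" "y \<in> A" "le x y"
  shows "leB (T x) (T y)"
proof -
  have "directed A le {x, y}"
    using assms poset_refl[OF assms(1,4)] unfolding directed_def
    by (intro conjI allI impI bexI[of _ y]) auto
  moreover have "is_sup A le {x, y} y"
    using assms unfolding is_sup_def by (auto intro: poset_refl)
  ultimately show ?thesis
    using mcp_is_sup[OF assms(2)] unfolding is_sup_def by auto
qed

lemma directed_image_mcp:
  assumes "poset A le" "mcp A le B leB T" "directed A le D"
  shows "directed B leB (T ` D)"
proof (rule directed_image_mono[OF assms(3)])
  have "D \<subseteq> A" using assms(3) unfolding directed_def by blast
  then show "\<forall>x\<in>D. T x \<in> B" "\<forall>x\<in>D. \<forall>y\<in>D. le x y \<longrightarrow> leB (T x) (T y)"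
    using mcp_into[OF assms(2)] mcp_mono[OF assms(1,2)] by (auto simp: subset_iff)
qed

lemma mcp_cong:
  assumes "mcp A le B leB f" "\<forall>x\<in>A. f x = g x"
  shows "mcp A le B leB g"
  unfolding mcp_def
proof (intro conjI allI impI)
  show "\<forall>x\<in>A. g x \<in> B" using assms unfolding mcp_def by auto
  fix D s assume Ds: "directed A le D \<and> is_sup A le D s"
  then have "g ` D = f ` D" "g s = f s"
    using assms(2) unfolding directed_def is_sup_def by (auto simp: subset_iff)
  then show "is_sup B leB (g ` D) (g s)" using mcp_is_sup[OF assms(1)] Ds by simp
qed

lemma mcp_id: "mcp A le A le (\<lambda>x. x)"
  unfolding mcp_def by simp

lemma mcp_const:
  assumes "c \<in> B" "leB c c"
  shows "mcp A le B leB (\<lambda>_. c)"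
  using assms directed_nonempty unfolding mcp_def is_sup_def by fastforce

lemma mcp_comp:
  assumes "poset A le" "mcp A le B leB f" "mcp B leB C leC g"
  shows "mcp A le C leC (\<lambda>x. g (f x))"
  unfolding mcp_def
proof (intro conjI allI impI ballI)
  show "g (f x) \<in> C" if "x \<in> A" for x using mcp_into[OF assms(3) mcp_into[OF assms(2) that]] .
  fix D s assume "directed A le D \<and> is_sup A le D s"
  then show "is_sup C leC ((\<lambda>x. g (f x)) ` D) (g (f s))"
    using mcp_is_sup[OF assms(3) directed_image_mcp[OF assms(1,2)] mcp_is_sup[OF assms(2)]]
    by (simp add: image_image)
qed

subsection \<open>Products\<close>

lemma is_sup_prod_iff:
  "is_sup (A1 \<times> A2) (prod_le le1 le2) S s \<longleftrightarrow>
     is_sup A1 le1 (fst ` S) (fst s) \<and> is_sup A2 le2 (snd ` S) (snd s)"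
proof
  assume s: "is_sup (A1 \<times> A2) (prod_le le1 le2) S s"
  then have in_A: "fst s \<in> A1" "snd s \<in> A2"
    and ub: "\<forall>x\<in>S. le1 (fst x) (fst s) \<and> le2 (snd x) (snd s)"
    and least: "\<And>u. u \<in> A1 \<times> A2 \<Longrightarrow> \<forall>x\<in>S. prod_le le1 le2 x u \<Longrightarrow> prod_le le1 le2 s u"
    unfolding is_sup_def prod_le_def by auto
  show "is_sup A1 le1 (fst ` S) (fst s) \<and> is_sup A2 le2 (snd ` S) (snd s)"
    unfolding is_sup_def
  proof (intro conjI ballI impI)
    fix u assume "u \<in> A1" "\<forall>x\<in>fst ` S. le1 x u"
    then show "le1 (fst s) u" using least[of "(u, snd s)"] ub in_A unfolding prod_le_def by auto
  next
    fix u assume "u \<in> A2" "\<forall>x\<in>snd ` S. le2 x u"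
    then show "le2 (snd s) u" using least[of "(fst s, u)"] ub in_A unfolding prod_le_def by auto
  qed (use in_A ub in auto)
next
  assume "is_sup A1 le1 (fst ` S) (fst s) \<and> is_sup A2 le2 (snd ` S) (snd s)"
  then show "is_sup (A1 \<times> A2) (prod_le le1 le2) S s"
    unfolding is_sup_def prod_le_def by (auto simp: mem_Times_iff)
qed

lemma poset_prod:
  assumes "poset A1 le1" and "poset A2 le2"
  shows "poset (A1 \<times> A2) (prod_le le1 le2)"
proof -
  have "prod_le le1 le2 x x" if "x \<in> A1 \<times> A2" for x
    using that poset_refl[OF assms(1)] poset_refl[OF assms(2)] by (auto simp: prod_le_def)
  moreover have "x = y" if "x \<in> A1 \<times> A2" "y \<in> A1 \<times> A2" "prod_le le1 le2 x y" "prod_le le1 le2 y x" for x y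
    using that poset_antisym[OF assms(1)] poset_antisym[OF assms(2)] by (auto simp: prod_le_def prod_eq_iff)
  moreover have "prod_le le1 le2 x z"
    if "x \<in> A1 \<times> A2" "y \<in> A1 \<times> A2" "z \<in> A1 \<times> A2" "prod_le le1 le2 x y" "prod_le le1 le2 y z" for x y z
    using that poset_trans[OF assms(1)] poset_trans[OF assms(2)] unfolding prod_le_def by (metis mem_Times_iff)
  ultimately show ?thesis unfolding poset_def by blast
qed

lemma mcp_fst: "mcp (A1 \<times> A2) (prod_le le1 le2) A1 le1 fst"
  unfolding mcp_def is_sup_prod_iff by auto

lemma mcp_snd: "mcp (A1 \<times> A2) (prod_le le1 le2) A2 le2 snd"
  unfolding mcp_def is_sup_prod_iff by auto

lemma mcp_pair:
  assumes "mcp A le A1 le1 f" "mcp A le A2 le2 g"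
  shows "mcp A le (A1 \<times> A2) (prod_le le1 le2) (\<lambda>x. (f x, g x))"
  using assms unfolding mcp_def is_sup_prod_iff by (simp add: image_image)

lemma mcp_map_prod:
  assumes "poset X1 le1" "poset X2 le2" "mcp X1 le1 Y1 leY1 f1" "mcp X2 le2 Y2 leY2 f2"
  shows "mcp (X1 \<times> X2) (prod_le le1 le2) (Y1 \<times> Y2) (prod_le leY1 leY2) (\<lambda>(x1, x2). (f1 x1, f2 x2))"
proof -
  have "mcp (X1 \<times> X2) (prod_le le1 le2) (Y1 \<times> Y2) (prod_le leY1 leY2) (\<lambda>p. (f1 (fst p), f2 (snd p)))"
    using poset_prod[OF assms(1,2)]
    by (intro mcp_pair mcp_comp[OF _ mcp_fst assms(3)] mcp_comp[OF _ mcp_snd assms(4)])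
  then show ?thesis by (simp add: case_prod_beta')
qed

lemma mcp_fix_snd:
  assumes "poset A1 le1" "poset A2 le2" "mcp (A1 \<times> A2) (prod_le le1 le2) Z leZ U" "y \<in> A2"
  shows "mcp A1 le1 Z leZ (\<lambda>x. U (x, y))"
  using assms by (intro mcp_comp[OF _ mcp_pair[OF mcp_id mcp_const]]) (auto intro: poset_refl)

lemma mcp_fix_fst:
  assumes "poset A1 le1" "poset A2 le2" "mcp (A1 \<times> A2) (prod_le le1 le2) Z leZ U" "y \<in> A1"
  shows "mcp A2 le2 Z leZ (\<lambda>x. U (y, x))"
  using assms by (intro mcp_comp[OF _ mcp_pair[OF mcp_const mcp_id]]) (auto intro: poset_refl)

lemma directed_fst:
  assumes "directed (A1 \<times> A2) (prod_le le1 le2) D"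
  shows "directed A1 le1 (fst ` D)"
proof (rule directed_image_mono[OF assms])
  show "\<forall>x\<in>D. fst x \<in> A1" using assms unfolding directed_def by auto
qed (simp add: prod_le_def)

lemma directed_snd:
  assumes "directed (A1 \<times> A2) (prod_le le1 le2) D"
  shows "directed A2 le2 (snd ` D)"
proof (rule directed_image_mono[OF assms])
  show "\<forall>x\<in>D. snd x \<in> A2" using assms unfolding directed_def by auto
qed (simp add: prod_le_def)

lemma dcpo_prod:
  assumes "dcpo A1 le1" "dcpo A2 le2"
  shows "dcpo (A1 \<times> A2) (prod_le le1 le2)"
  unfolding dcpo_def
proof (intro conjI allI impI)
  show "poset (A1 \<times> A2) (prod_le le1 le2)" using assms poset_prod unfolding dcpo_def by blast
  fix D assume "directed (A1 \<times> A2) (prod_le le1 le2) D"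
  then have "directed A1 le1 (fst ` D)" "directed A2 le2 (snd ` D)"
    by (rule directed_fst, rule directed_snd)
  then obtain s1 s2 where "is_sup A1 le1 (fst ` D) s1" "is_sup A2 le2 (snd ` D) s2"
    using assms unfolding dcpo_def has_sup_def by blast
  then have "is_sup (A1 \<times> A2) (prod_le le1 le2) D (s1, s2)" unfolding is_sup_prod_iff by simp
  then show "has_sup (A1 \<times> A2) (prod_le le1 le2) D" unfolding has_sup_def by blast
qed

subsection \<open>Iterated suprema\<close>

lemma is_sup_iterated:
  assumes pZ: "poset Z leZ" and into: "\<forall>i\<in>I. \<forall>j\<in>J. f i j \<in> Z"
    and m: "is_sup Z leZ (case_prod f ` (I \<times> J)) m"
    and r: "\<forall>i\<in>I. is_sup Z leZ (f i ` J) (r i)"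
  shows "is_sup Z leZ (r ` I) m"
  unfolding is_sup_def
proof (intro conjI ballI impI)
  show "m \<in> Z" using m unfolding is_sup_def by blast
  fix x assume "x \<in> r ` I"
  then obtain i where "i \<in> I" "x = r i" by blast
  then show "leZ x m" using m r unfolding is_sup_def by auto
next
  fix u assume u: "u \<in> Z" "\<forall>x\<in>r ` I. leZ x u"
  have "leZ (f i j) u" if "i \<in> I" "j \<in> J" for i j
  proof -
    have "leZ (f i j) (r i)" "r i \<in> Z" using r that unfolding is_sup_def by auto
    then show ?thesis using poset_trans[OF pZ _ _ u(1)] u(2) into that by blast
  qed
  then show "leZ m u" using m u(1) unfolding is_sup_def by auto
qed

lemma directed_prod_image:
  assumes pZ: "poset Z leZ" and I: "directed A leA I" and J: "directed B leB J"
    and into: "\<forall>i\<in>I. \<forall>j\<in>J. f i j \<in> Z"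
    and mono1: "\<forall>i\<in>I. \<forall>i'\<in>I. \<forall>j\<in>J. leA i i' \<longrightarrow> leZ (f i j) (f i' j)"
    and mono2: "\<forall>i\<in>I. \<forall>j\<in>J. \<forall>j'\<in>J. leB j j' \<longrightarrow> leZ (f i j) (f i j')"
  shows "directed Z leZ (case_prod f ` (I \<times> J))"
proof (rule directed_image_mono)
  show "directed (A \<times> B) (prod_le leA leB) (I \<times> J)"
    unfolding directed_def
  proof (intro conjI allI impI)
    show "I \<times> J \<subseteq> A \<times> B" using I J unfolding directed_def by blast
    fix F assume F: "finite F \<and> F \<subseteq> I \<times> J"
    then have "finite (fst ` F)" "fst ` F \<subseteq> I" "finite (snd ` F)" "snd ` F \<subseteq> J" by auto
    then obtain a b where "a \<in> I" "\<forall>x\<in>fst ` F. leA x a" "b \<in> J" "\<forall>x\<in>snd ` F. leB x b"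
      using I J unfolding directed_def by meson
    then show "\<exists>u\<in>I \<times> J. \<forall>x\<in>F. prod_le leA leB x u"
      by (intro bexI[of _ "(a, b)"]) (auto simp: prod_le_def)
  qed
  show "\<forall>x\<in>I \<times> J. case_prod f x \<in> Z" using into by auto
  show "\<forall>x\<in>I \<times> J. \<forall>y\<in>I \<times> J. prod_le leA leB x y \<longrightarrow> leZ (case_prod f x) (case_prod f y)"
  proof (clarsimp simp: prod_le_def)
    fix i j i' j' assume "i \<in> I" "j \<in> J" "i' \<in> I" "j' \<in> J" "leA i i'" "leB j j'"
    then show "leZ (f i j) (f i' j')"
      using poset_trans[OF pZ, of "f i j" "f i' j" "f i' j'"] into mono1 mono2 by blast
  qed
qed

lemma directed_prod_image_has_sup:
  assumes dZ: "dcpo Z leZ" and pA: "poset A leA" and pB: "poset B leB"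
    and I: "directed A leA I" and J: "directed B leB J"
    and mcp1: "\<forall>j\<in>J. mcp A leA Z leZ (\<lambda>i. f i j)" and mcp2: "\<forall>i\<in>I. mcp B leB Z leZ (f i)"
  obtains m where "is_sup Z leZ (case_prod f ` (I \<times> J)) m"
proof -
  have IA: "I \<subseteq> A" and JB: "J \<subseteq> B" using I J unfolding directed_def by blast+
  have pZ: "poset Z leZ" using dZ unfolding dcpo_def by blast
  have into: "\<forall>i\<in>I. \<forall>j\<in>J. f i j \<in> Z"
    using mcp2 JB by (auto intro: mcp_into)
  have mono1: "\<forall>i\<in>I. \<forall>i'\<in>I. \<forall>j\<in>J. leA i i' \<longrightarrow> leZ (f i j) (f i' j)"
    using IA by (auto intro: mcp_mono[OF pA mcp1[rule_format]])
  have mono2: "\<forall>i\<in>I. \<forall>j\<in>J. \<forall>j'\<in>J. leB j j' \<longrightarrow> leZ (f i j) (f i j')"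
    using JB by (auto intro: mcp_mono[OF pB mcp2[rule_format]])
  have "directed Z leZ (case_prod f ` (I \<times> J))"
    using directed_prod_image[OF pZ I J into mono1 mono2] .
  then show ?thesis using that dZ unfolding dcpo_def has_sup_def by blast
qed

lemma mcp_at_directed_sup:
  assumes dZ: "dcpo Z leZ" and pA: "poset A leA" and pB: "poset B leB"
    and mcpB: "\<forall>a\<in>A. mcp B leB Z leZ (f a)"
    and D: "directed B leB D" and y: "is_sup B leB D y"
    and mcpA: "\<forall>d\<in>D. mcp A leA Z leZ (\<lambda>a. f a d)"
  shows "mcp A leA Z leZ (\<lambda>a. f a y)"
  unfolding mcp_def
proof (intro conjI allI impI ballI)
  have pZ: "poset Z leZ" using dZ unfolding dcpo_def by blast
  have yB: "y \<in> B" using y unfolding is_sup_def by blast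
  show "f a y \<in> Z" if "a \<in> A" for a using mcp_into[OF mcpB[rule_format, OF that] yB] .
  fix E e assume "directed A leA E \<and> is_sup A leA E e"
  then have E: "directed A leA E" and e: "is_sup A leA E e" by blast+
  have EA: "E \<subseteq> A" and DB: "D \<subseteq> B" using D E unfolding directed_def by blast+
  have eA: "e \<in> A" using e unfolding is_sup_def by blast
  have into: "\<forall>d\<in>D. \<forall>a\<in>E. f a d \<in> Z"
    using EA DB by (auto intro: mcp_into[OF mcpB[rule_format]])
  obtain m where m: "is_sup Z leZ ((\<lambda>(d, a). f a d) ` (D \<times> E)) m"
    using directed_prod_image_has_sup[OF dZ pB pA D E, of "\<lambda>d a. f a d"] mcpA mcpB EA by blast
  have "\<forall>d\<in>D. is_sup Z leZ ((\<lambda>a. f a d) ` E) (f e d)"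
    using mcp_is_sup[OF _ E e] mcpA by blast
  then have "is_sup Z leZ (f e ` D) m" using is_sup_iterated[OF pZ into m] by simp
  then have "m = f e y"
    using is_sup_unique[OF pZ _ mcp_is_sup[OF mcpB[rule_format, OF eA] D y]] by blast
  moreover have "(\<lambda>(d, a). f a d) ` (D \<times> E) = case_prod f ` (E \<times> D)" by auto
  ultimately have joint: "is_sup Z leZ (case_prod f ` (E \<times> D)) (f e y)" using m by simp
  have into': "\<forall>a\<in>E. \<forall>d\<in>D. f a d \<in> Z" using into by blast
  have "\<forall>a\<in>E. is_sup Z leZ (f a ` D) (f a y)"
    using mcp_is_sup[OF _ D y] mcpB EA by blast
  then show "is_sup Z leZ ((\<lambda>a. f a y) ` E) (f e y)"
    by (rule is_sup_iterated[OF pZ into' joint])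
qed

lemma is_sup_prod_image_diagonal:
  assumes pZ: "poset Z leZ" and pA: "poset A leA" and pB: "poset B leB"
    and mcp1: "\<forall>b\<in>B. mcp A leA Z leZ (\<lambda>a. f a b)" and mcp2: "\<forall>a\<in>A. mcp B leB Z leZ (f a)"
    and D: "directed (A \<times> B) (prod_le leA leB) D"
    and m: "is_sup Z leZ (case_prod f ` (fst ` D \<times> snd ` D)) m"
  shows "is_sup Z leZ (case_prod f ` D) m"
proof (rule is_sup_cofinal[OF pZ _ _ _ m])
  have DAB: "D \<subseteq> A \<times> B" using D unfolding directed_def by blast
  have into: "f a b \<in> Z" if "a \<in> A" "b \<in> B" for a b
    using mcp_into[OF mcp2[rule_format, OF that(1)] that(2)] .
  show "case_prod f ` D \<subseteq> case_prod f ` (fst ` D \<times> snd ` D)" by force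
  show "case_prod f ` (fst ` D \<times> snd ` D) \<subseteq> Z" using into DAB by fastforce
  show "\<forall>z\<in>case_prod f ` (fst ` D \<times> snd ` D). \<exists>x\<in>case_prod f ` D. leZ z x"
  proof
    fix z assume "z \<in> case_prod f ` (fst ` D \<times> snd ` D)"
    then obtain p q where pq: "p \<in> D" "q \<in> D" "z = f (fst p) (snd q)" by auto
    obtain u where u: "u \<in> D" "prod_le leA leB p u" "prod_le leA leB q u"
      using directed_upper_bound2[OF D pq(1,2)] .
    have in_AB: "fst p \<in> A" "snd q \<in> B" "fst u \<in> A" "snd u \<in> B" using pq u DAB by auto
    have "leZ (f (fst p) (snd q)) (f (fst u) (snd q))"
      using mcp_mono[OF pA mcp1[rule_format, OF in_AB(2)] in_AB(1,3)] u(2) by (simp add: prod_le_def)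
    moreover have "leZ (f (fst u) (snd q)) (f (fst u) (snd u))"
      using mcp_mono[OF pB mcp2[rule_format, OF in_AB(3)] in_AB(2,4)] u(3) by (simp add: prod_le_def)
    ultimately have "leZ z (case_prod f u)"
      using poset_trans[OF pZ into[OF in_AB(1,2)] into[OF in_AB(3,2)] into[OF in_AB(3,4)]] pq(3)
      by (simp add: case_prod_beta)
    then show "\<exists>x\<in>case_prod f ` D. leZ z x" using u(1) by blast
  qed
qed

lemma mcp_case_prodI:
  assumes dZ: "dcpo Z leZ" and pA: "poset A leA" and pB: "poset B leB"
    and mcp1: "\<forall>b\<in>B. mcp A leA Z leZ (\<lambda>a. f a b)" and mcp2: "\<forall>a\<in>A. mcp B leB Z leZ (f a)"
  shows "mcp (A \<times> B) (prod_le leA leB) Z leZ (case_prod f)"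
  unfolding mcp_def
proof (intro conjI allI impI ballI)
  have pZ: "poset Z leZ" using dZ unfolding dcpo_def by blast
  have into: "f a b \<in> Z" if "a \<in> A" "b \<in> B" for a b
    using mcp_into[OF mcp2[rule_format, OF that(1)] that(2)] .
  then show "case_prod f p \<in> Z" if "p \<in> A \<times> B" for p using that by auto
  fix D s assume "directed (A \<times> B) (prod_le leA leB) D \<and> is_sup (A \<times> B) (prod_le leA leB) D s"
  then have D: "directed (A \<times> B) (prod_le leA leB) D" and s: "is_sup (A \<times> B) (prod_le leA leB) D s"
    by blast+
  have I: "directed A leA (fst ` D)" and J: "directed B leB (snd ` D)"
    using directed_fst[OF D] directed_snd[OF D] .
  have s1: "is_sup A leA (fst ` D) (fst s)" and s2: "is_sup B leB (snd ` D) (snd s)"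
    using s unfolding is_sup_prod_iff by blast+
  have IA: "fst ` D \<subseteq> A" and JB: "snd ` D \<subseteq> B" using I J unfolding directed_def by blast+
  have sB: "snd s \<in> B" using s2 unfolding is_sup_def by blast
  obtain m where m: "is_sup Z leZ (case_prod f ` (fst ` D \<times> snd ` D)) m"
  proof (rule directed_prod_image_has_sup[OF dZ pA pB I J])
    show "\<forall>j\<in>snd ` D. mcp A leA Z leZ (\<lambda>i. f i j)" "\<forall>i\<in>fst ` D. mcp B leB Z leZ (f i)"
      using mcp1 mcp2 IA JB by blast+
  qed
  have "\<forall>i\<in>fst ` D. \<forall>j\<in>snd ` D. f i j \<in> Z" using into IA JB by blast
  moreover have "\<forall>i\<in>fst ` D. is_sup Z leZ (f i ` snd ` D) (f i (snd s))"
    using mcp_is_sup[OF _ J s2] mcp2 IA by blast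
  ultimately have "is_sup Z leZ ((\<lambda>i. f i (snd s)) ` fst ` D) m"
    by (rule is_sup_iterated[OF pZ _ m])
  then have "m = case_prod f s"
    using is_sup_unique[OF pZ _ mcp_is_sup[OF mcp1[rule_format, OF sB] I s1]] by (simp add: case_prod_beta)
  then show "is_sup Z leZ (case_prod f ` D) (case_prod f s)"
    using is_sup_prod_image_diagonal[OF pZ pA pB mcp1 mcp2 D m] by simp
qed

subsection \<open>Directed completions\<close>

definition directed_sup_closed :: "'a set \<Rightarrow> ('a \<Rightarrow> 'a \<Rightarrow> bool) \<Rightarrow> 'a set \<Rightarrow> bool" where
  "directed_sup_closed A le P \<longleftrightarrow>
     P \<subseteq> A \<and> (\<forall>D s. directed A le D \<and> D \<subseteq> P \<and> is_sup A le D s \<longrightarrow> s \<in> P)"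

lemma directed_sup_closed_is_sup:
  assumes "dcpo A le" "directed_sup_closed A le P" "directed P le D"
  obtains s where "is_sup A le D s" "is_sup P le D s"
proof -
  have "P \<subseteq> A" using assms(2) unfolding directed_sup_closed_def by blast
  then have "directed A le D" "D \<subseteq> P" using assms(3) unfolding directed_def by blast+
  then obtain s where "is_sup A le D s" using assms(1) unfolding dcpo_def has_sup_def by blast
  moreover have "s \<in> P"
    using assms(2) \<open>directed A le D\<close> \<open>D \<subseteq> P\<close> calculation unfolding directed_sup_closed_def by blast
  ultimately show ?thesis using that is_sup_in_subset[OF _ \<open>P \<subseteq> A\<close>] by blast
qed

lemma dcpo_directed_sup_closed:
  assumes "dcpo A le" "directed_sup_closed A le P"
  shows "dcpo P le"
  unfolding dcpo_def has_sup_def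
proof (intro conjI allI impI)
  show "poset P le"
    using assms poset_subset unfolding dcpo_def directed_sup_closed_def by blast
  show "\<exists>s. is_sup P le D s" if "directed P le D" for D
    using directed_sup_closed_is_sup[OF assms that] by metis
qed

lemma mcp_subset_codomain:
  assumes "mcp A le B leB T" "C \<subseteq> B" "\<forall>x\<in>A. T x \<in> C"
  shows "mcp A le C leB T"
  unfolding mcp_def
proof (intro conjI allI impI)
  show "\<forall>x\<in>A. T x \<in> C" by (rule assms(3))
  fix D s assume "directed A le D \<and> is_sup A le D s"
  moreover have "T s \<in> C" using calculation assms(3) unfolding is_sup_def by blast
  ultimately show "is_sup C leB (T ` D) (T s)"
    using is_sup_in_subset[OF mcp_is_sup[OF assms(1)] assms(2)] by blast
qed

lemma mcp_directed_sup_closed_codomain: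
  assumes pA: "poset A le" and dB: "dcpo B leB" and P: "directed_sup_closed B leB P"
    and T: "mcp A le P leB T"
  shows "mcp A le B leB T"
  unfolding mcp_def
proof (intro conjI allI impI ballI)
  show "T x \<in> B" if "x \<in> A" for x
    using mcp_into[OF T that] P unfolding directed_sup_closed_def by blast
  fix D s assume "directed A le D \<and> is_sup A le D s"
  then have "directed A le D" "is_sup A le D s" by blast+
  then have dir: "directed P leB (T ` D)" and sup: "is_sup P leB (T ` D) (T s)"
    using directed_image_mcp[OF pA T] mcp_is_sup[OF T] by blast+
  obtain t where "is_sup B leB (T ` D) t" "is_sup P leB (T ` D) t"
    using directed_sup_closed_is_sup[OF dB P dir] .
  moreover have "poset P leB" using dcpo_directed_sup_closed[OF dB P] unfolding dcpo_def by blast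
  ultimately show "is_sup B leB (T ` D) (T s)" using is_sup_unique[OF _ _ sup] by metis
qed

lemma directed_completion_extension:
  fixes Z :: "'z set"
  assumes "directed_completion TYPE('z) X le Xb leb \<iota>" "dcpo Z leZ" "mcp X le Z leZ T"
  obtains Tb where "mcp Xb leb Z leZ Tb" "\<forall>x\<in>X. Tb (\<iota> x) = T x"
proof -
  have "\<forall>(Z :: 'z set) leZ T. dcpo Z leZ \<and> mcp X le Z leZ T \<longrightarrow>
      (\<exists>Tb. mcp Xb leb Z leZ Tb \<and> (\<forall>x\<in>X. Tb (\<iota> x) = T x))"
    using assms(1) unfolding directed_completion_def by blast
  then show ?thesis using that assms(2,3) by blast
qed

lemma directed_completion_extension_unique:
  fixes Z :: "'z set"
  assumes dc: "directed_completion TYPE('z) X le Xb leb \<iota>" and "dcpo Z leZ" "mcp X le Z leZ T"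
    and U: "mcp Xb leb Z leZ U" "\<forall>x\<in>X. U (\<iota> x) = T x"
    and V: "mcp Xb leb Z leZ V" "\<forall>x\<in>X. V (\<iota> x) = T x"
    and "y \<in> Xb"
  shows "U y = V y"
proof -
  obtain Tb where "\<forall>W. mcp Xb leb Z leZ W \<and> (\<forall>x\<in>X. W (\<iota> x) = T x) \<longrightarrow> (\<forall>y\<in>Xb. W y = Tb y)"
    using assms(1-3) unfolding directed_completion_def by blast
  then show ?thesis using U V \<open>y \<in> Xb\<close> by metis
qed

text \<open>The universal property is applied here to the sub-dcpo P itself, so the completion must be
  universal for dcpos living in its own type.\<close>

lemma directed_completion_induct:
  fixes Xb :: "'b set"
  assumes dc: "directed_completion TYPE('b) X le Xb leb \<iota>"
    and P: "directed_sup_closed Xb leb P" and \<iota>_P: "\<iota> ` X \<subseteq> P"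
  shows "Xb \<subseteq> P"
proof
  have dXb: "dcpo Xb leb" and \<iota>: "mcp X le Xb leb \<iota>"
    using dc unfolding directed_completion_def by blast+
  have "mcp X le P leb \<iota>" using mcp_subset_codomain[OF \<iota>] P \<iota>_P
    unfolding directed_sup_closed_def by blast
  then obtain R where R: "mcp Xb leb P leb R" "\<forall>x\<in>X. R (\<iota> x) = \<iota> x"
    using directed_completion_extension[OF dc dcpo_directed_sup_closed[OF dXb P]] by blast
  have R_Xb: "mcp Xb leb Xb leb R"
    using mcp_directed_sup_closed_codomain[OF _ dXb P R(1)] dXb unfolding dcpo_def by blast
  fix y assume "y \<in> Xb"
  then have "R y = y"
    using directed_completion_extension_unique[OF dc dXb \<iota> R_Xb R(2) mcp_id] by simp
  then show "y \<in> P" using mcp_into[OF R(1) \<open>y \<in> Xb\<close>] by simp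
qed

lemma directed_completion_extend_fst:
  fixes f :: "'a \<Rightarrow> 'c \<Rightarrow> 'z" and Xb :: "'b set"
  assumes dc: "directed_completion TYPE('z) X le Xb leb \<iota>"
    and dc_self: "directed_completion TYPE('b) X le Xb leb \<iota>"
    and dZ: "dcpo Z leZ" and pC: "poset C leC"
    and mcp1: "\<forall>c\<in>C. mcp X le Z leZ (\<lambda>x. f x c)" and mcp2: "\<forall>x\<in>X. mcp C leC Z leZ (f x)"
  obtains F :: "'b \<Rightarrow> 'c \<Rightarrow> 'z"
  where "\<forall>c\<in>C. mcp Xb leb Z leZ (\<lambda>y. F y c)" "\<forall>y\<in>Xb. mcp C leC Z leZ (F y)"
    "\<forall>x\<in>X. \<forall>c\<in>C. F (\<iota> x) c = f x c"
proof -
  have dXb: "dcpo Xb leb" and \<iota>: "mcp X le Xb leb \<iota>"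
    using dc unfolding directed_completion_def by blast+
  have "\<forall>c\<in>C. \<exists>G. mcp Xb leb Z leZ G \<and> (\<forall>x\<in>X. G (\<iota> x) = f x c)"
    using directed_completion_extension[OF dc dZ] mcp1 by metis
  then obtain G where G: "\<forall>c\<in>C. mcp Xb leb Z leZ (G c) \<and> (\<forall>x\<in>X. G c (\<iota> x) = f x c)"
    by metis
  define F where "F y c = G c y" for y c
  have "Xb \<subseteq> {y \<in> Xb. mcp C leC Z leZ (F y)}"
  proof (rule directed_completion_induct[OF dc_self])
    show "directed_sup_closed Xb leb {y \<in> Xb. mcp C leC Z leZ (F y)}"
      unfolding directed_sup_closed_def
    proof (intro conjI allI impI)
      fix D s assume D: "directed Xb leb D \<and> D \<subseteq> {y \<in> Xb. mcp C leC Z leZ (F y)} \<and> is_sup Xb leb D s"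
      have "mcp C leC Z leZ (\<lambda>c. F s c)"
      proof (rule mcp_at_directed_sup[OF dZ pC])
        show "poset Xb leb" using dXb unfolding dcpo_def by blast
        show "\<forall>c\<in>C. mcp Xb leb Z leZ (\<lambda>y. F y c)" using G unfolding F_def by simp
      qed (use D in auto)
      then show "s \<in> {y \<in> Xb. mcp C leC Z leZ (F y)}" using D unfolding is_sup_def by simp
    qed blast
    show "\<iota> ` X \<subseteq> {y \<in> Xb. mcp C leC Z leZ (F y)}"
      using mcp_into[OF \<iota>] mcp_cong[OF mcp2[rule_format]] G unfolding F_def by auto
  qed
  then show ?thesis
  proof (intro that[of F])
    show "\<forall>c\<in>C. mcp Xb leb Z leZ (\<lambda>y. F y c)" "\<forall>x\<in>X. \<forall>c\<in>C. F (\<iota> x) c = f x c"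
      using G by (simp_all add: F_def)
  qed blast
qed

lemma directed_completion_prod_extension:
  fixes Z :: "'z set" and X1 :: "'a1 set" and X2 :: "'a2 set" and Xb1 :: "'b1 set" and Xb2 :: "'b2 set"
  assumes dc1: "directed_completion TYPE('z) X1 le1 Xb1 leb1 \<iota>1"
    and dc1_self: "directed_completion TYPE('b1) X1 le1 Xb1 leb1 \<iota>1"
    and dc2: "directed_completion TYPE('z) X2 le2 Xb2 leb2 \<iota>2"
    and dc2_self: "directed_completion TYPE('b2) X2 le2 Xb2 leb2 \<iota>2"
    and p1: "poset X1 le1" and p2: "poset X2 le2"
    and dZ: "dcpo Z leZ" and T: "mcp (X1 \<times> X2) (prod_le le1 le2) Z leZ T"
  obtains Tb where "mcp (Xb1 \<times> Xb2) (prod_le leb1 leb2) Z leZ Tb"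
    "\<forall>x1\<in>X1. \<forall>x2\<in>X2. Tb (\<iota>1 x1, \<iota>2 x2) = T (x1, x2)"
proof -
  have pb1: "poset Xb1 leb1" and pb2: "poset Xb2 leb2"
    using dc1 dc2 unfolding directed_completion_def dcpo_def by blast+
  obtain G :: "'b1 \<Rightarrow> 'a2 \<Rightarrow> 'z" where G: "\<forall>x2\<in>X2. mcp Xb1 leb1 Z leZ (\<lambda>y1. G y1 x2)"
      "\<forall>y1\<in>Xb1. mcp X2 le2 Z leZ (G y1)" "\<forall>x1\<in>X1. \<forall>x2\<in>X2. G (\<iota>1 x1) x2 = T (x1, x2)"
  proof (rule directed_completion_extend_fst[OF dc1 dc1_self dZ p2])
    show "\<forall>x2\<in>X2. mcp X1 le1 Z leZ (\<lambda>x1. T (x1, x2))"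
      using mcp_fix_snd[OF p1 p2 T] by blast
    show "\<forall>x1\<in>X1. mcp X2 le2 Z leZ (\<lambda>x2. T (x1, x2))"
      using mcp_fix_fst[OF p1 p2 T] by blast
  qed
  obtain K :: "'b2 \<Rightarrow> 'b1 \<Rightarrow> 'z" where K: "\<forall>y1\<in>Xb1. mcp Xb2 leb2 Z leZ (\<lambda>y2. K y2 y1)"
      "\<forall>y2\<in>Xb2. mcp Xb1 leb1 Z leZ (K y2)" "\<forall>x2\<in>X2. \<forall>y1\<in>Xb1. K (\<iota>2 x2) y1 = G y1 x2"
    by (rule directed_completion_extend_fst[OF dc2 dc2_self dZ pb1 G(2,1)])
  show ?thesis
  proof (rule that[of "\<lambda>(y1, y2). K y2 y1"])
    show "mcp (Xb1 \<times> Xb2) (prod_le leb1 leb2) Z leZ (\<lambda>(y1, y2). K y2 y1)"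
      using mcp_case_prodI[OF dZ pb1 pb2, of "\<lambda>y1 y2. K y2 y1"] K(1,2) by simp
    have \<iota>1: "mcp X1 le1 Xb1 leb1 \<iota>1" using dc1 unfolding directed_completion_def by blast
    show "\<forall>x1\<in>X1. \<forall>x2\<in>X2. (\<lambda>(y1, y2). K y2 y1) (\<iota>1 x1, \<iota>2 x2) = T (x1, x2)"
    proof (intro ballI)
      fix x1 x2 assume "x1 \<in> X1" "x2 \<in> X2"
      then show "(\<lambda>(y1, y2). K y2 y1) (\<iota>1 x1, \<iota>2 x2) = T (x1, x2)"
        using K(3) G(3) mcp_into[OF \<iota>1 \<open>x1 \<in> X1\<close>] by simp
    qed
  qed
qed

lemma directed_completion_prod_eqI:
  fixes Z :: "'z set"
  assumes dc1: "directed_completion TYPE('z) X1 le1 Xb1 leb1 \<iota>1"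
    and dc2: "directed_completion TYPE('z) X2 le2 Xb2 leb2 \<iota>2"
    and dZ: "dcpo Z leZ" and p1: "poset X1 le1" and p2: "poset X2 le2"
    and U: "mcp (Xb1 \<times> Xb2) (prod_le leb1 leb2) Z leZ U"
    and V: "mcp (Xb1 \<times> Xb2) (prod_le leb1 leb2) Z leZ V"
    and agree: "\<forall>x1\<in>X1. \<forall>x2\<in>X2. U (\<iota>1 x1, \<iota>2 x2) = V (\<iota>1 x1, \<iota>2 x2)"
    and y: "y \<in> Xb1 \<times> Xb2"
  shows "U y = V y"
proof -
  have \<iota>1: "mcp X1 le1 Xb1 leb1 \<iota>1" and \<iota>2: "mcp X2 le2 Xb2 leb2 \<iota>2"
    and pb1: "poset Xb1 leb1" and pb2: "poset Xb2 leb2"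
    using dc1 dc2 unfolding directed_completion_def dcpo_def by blast+
  note U1 = mcp_fix_snd[OF pb1 pb2 U] and U2 = mcp_fix_fst[OF pb1 pb2 U]
    and V1 = mcp_fix_snd[OF pb1 pb2 V] and V2 = mcp_fix_fst[OF pb1 pb2 V]
  have on_\<iota>2: "U (y1, \<iota>2 x2) = V (y1, \<iota>2 x2)" if "x2 \<in> X2" "y1 \<in> Xb1" for x2 y1
  proof -
    have y2: "\<iota>2 x2 \<in> Xb2" using mcp_into[OF \<iota>2 that(1)] .
    show ?thesis
    proof (rule directed_completion_extension_unique[OF dc1 dZ mcp_comp[OF p1 \<iota>1 U1[OF y2]]
          U1[OF y2] _ V1[OF y2] _ that(2)])
      show "\<forall>x1\<in>X1. V (\<iota>1 x1, \<iota>2 x2) = U (\<iota>1 x1, \<iota>2 x2)" using agree that(1) by simp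
    qed simp
  qed
  obtain y1 y2 where y12: "y = (y1, y2)" "y1 \<in> Xb1" "y2 \<in> Xb2" using y by blast
  have "U (y1, y2) = V (y1, y2)"
  proof (rule directed_completion_extension_unique[OF dc2 dZ mcp_comp[OF p2 \<iota>2 U2[OF y12(2)]]
        U2[OF y12(2)] _ V2[OF y12(2)] _ y12(3)])
    show "\<forall>x2\<in>X2. V (y1, \<iota>2 x2) = U (y1, \<iota>2 x2)" using on_\<iota>2 y12(2) by simp
  qed simp
  then show ?thesis using y12(1) by simp
qed

theorem mainTheorem7:
  fixes X1 :: "'a1 set" and le1 :: "'a1 \<Rightarrow> 'a1 \<Rightarrow> bool"
    and X2 :: "'a2 set" and le2 :: "'a2 \<Rightarrow> 'a2 \<Rightarrow> bool"
    and Xb1 :: "'b1 set" and leb1 :: "'b1 \<Rightarrow> 'b1 \<Rightarrow> bool" and \<iota>1 :: "'a1 \<Rightarrow> 'b1"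
    and Xb2 :: "'b2 set" and leb2 :: "'b2 \<Rightarrow> 'b2 \<Rightarrow> bool" and \<iota>2 :: "'a2 \<Rightarrow> 'b2"
  assumes "poset X1 le1" and "poset X2 le2"
    and "directed_completion TYPE('z) X1 le1 Xb1 leb1 \<iota>1"
    and "directed_completion TYPE('b1) X1 le1 Xb1 leb1 \<iota>1"
    and "directed_completion TYPE('z) X2 le2 Xb2 leb2 \<iota>2"
    and "directed_completion TYPE('b2) X2 le2 Xb2 leb2 \<iota>2"
  shows "directed_completion TYPE('z) (X1 \<times> X2) (prod_le le1 le2)
           (Xb1 \<times> Xb2) (prod_le leb1 leb2) (\<lambda>(x1, x2). (\<iota>1 x1, \<iota>2 x2))"
proof -
  have d1: "dcpo Xb1 leb1" and \<iota>1: "mcp X1 le1 Xb1 leb1 \<iota>1"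
    and d2: "dcpo Xb2 leb2" and \<iota>2: "mcp X2 le2 Xb2 leb2 \<iota>2"
    using assms(3,5) unfolding directed_completion_def by blast+
  have "\<exists>Tb. mcp (Xb1 \<times> Xb2) (prod_le leb1 leb2) Z leZ Tb \<and>
      (\<forall>x\<in>X1 \<times> X2. Tb ((\<lambda>(x1, x2). (\<iota>1 x1, \<iota>2 x2)) x) = T x) \<and>
      (\<forall>U. mcp (Xb1 \<times> Xb2) (prod_le leb1 leb2) Z leZ U \<and>
        (\<forall>x\<in>X1 \<times> X2. U ((\<lambda>(x1, x2). (\<iota>1 x1, \<iota>2 x2)) x) = T x) \<longrightarrow> (\<forall>y\<in>Xb1 \<times> Xb2. U y = Tb y))"
    if dZ: "dcpo Z leZ" and T: "mcp (X1 \<times> X2) (prod_le le1 le2) Z leZ T" for Z :: "'z set" and leZ T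
  proof -
    obtain Tb where Tb: "mcp (Xb1 \<times> Xb2) (prod_le leb1 leb2) Z leZ Tb"
      "\<forall>x1\<in>X1. \<forall>x2\<in>X2. Tb (\<iota>1 x1, \<iota>2 x2) = T (x1, x2)"
      using directed_completion_prod_extension[OF assms(3-6,1,2) dZ T] .
    show ?thesis
    proof (intro exI[of _ Tb] conjI allI impI ballI)
      show "Tb ((\<lambda>(x1, x2). (\<iota>1 x1, \<iota>2 x2)) x) = T x" if "x \<in> X1 \<times> X2" for x
        using Tb(2) that by auto
      fix U y assume "mcp (Xb1 \<times> Xb2) (prod_le leb1 leb2) Z leZ U \<and>
        (\<forall>x\<in>X1 \<times> X2. U ((\<lambda>(x1, x2). (\<iota>1 x1, \<iota>2 x2)) x) = T x)" "y \<in> Xb1 \<times> Xb2"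
      then show "U y = Tb y"
        using directed_completion_prod_eqI[OF assms(3,5) dZ assms(1,2) _ Tb(1)] Tb(2) by simp
    qed (rule Tb(1))
  qed
  then show ?thesis
    unfolding directed_completion_def
    using dcpo_prod[OF d1 d2] mcp_map_prod[OF assms(1,2) \<iota>1 \<iota>2] by blast
qed

end
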